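(* Let $k\ge 2$ be an integer and let $G_k$ be a connected triangle-free graph with chromatic number $k$, with vertices $v_1,\dots,v_n$. Let $H_k=G_k\boxtimes K_2$ be the graph obtained from $G_k$ by replacing each vertex $v_i$ by two adjacent vertices $x_i,y_i$ and each edge $v_iv_j$ of $G_k$ by a copy of $K_4$ on $\{x_i,y_i,x_j,y_j\}$ (and no other edges). Then: (i) $W^-(H_k,K_3)=2$; (ii) for every integer $s\ge k$, the $K_3$-WORM colorings of $H_k$ using $s$ colors in which $x_1$ and $y_1$ receive the same color are in one-to-one correspondence with the proper vertex colorings of $G_k$ using $s$ colors (namely, in each such coloring every pair $\{x_i,y_i\}$ is monochromatic, and giving $v_i$ the color of $\{x_i,y_i\}$ yields the correspondence); (iii) if $k\ge 4$ and $3\le t\le k-1$, then $H_k$ admits no $K_3$-WORM coloring using exactly $t$ colors.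
   Context: A $K_3$-WORM coloring of a graph $G$ is an assignment of colors to the vertices of $G$ such that no triangle ($K_3$-subgraph) of $G$ is monochromatic or rainbow; equivalently, the three vertices of every triangle receive exactly two distinct colors. For a graph $G$ admitting such a coloring, $W^-(G,K_3)$ denotes the minimum number of colors used in a $K_3$-WORM coloring of $G$. *)

theory Defs
  imports Main "HOL-Library.FuncSet"
begin

definition simple_graph :: "'a set \<Rightarrow> ('a \<Rightarrow> 'a \<Rightarrow> bool) \<Rightarrow> bool" where
  "simple_graph V E \<longleftrightarrow> finite V \<and> (\<forall>u v. E u v \<longrightarrow> E v u) \<and> (\<forall>u. \<not> E u u)
     \<and> (\<forall>u v. E u v \<longrightarrow> u \<in> V \<and> v \<in> V)"

definition connected_graph :: "'a set \<Rightarrow> ('a \<Rightarrow> 'a \<Rightarrow> bool) \<Rightarrow> bool" where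
  "connected_graph V E \<longleftrightarrow> (\<forall>u\<in>V. \<forall>v\<in>V. (\<lambda>x y. E x y \<and> x \<in> V \<and> y \<in> V)\<^sup>*\<^sup>* u v)"

definition triangle_free :: "'a set \<Rightarrow> ('a \<Rightarrow> 'a \<Rightarrow> bool) \<Rightarrow> bool" where
  "triangle_free V E \<longleftrightarrow> \<not> (\<exists>a\<in>V. \<exists>b\<in>V. \<exists>c\<in>V. E a b \<and> E b c \<and> E a c)"

definition proper_coloring :: "'a set \<Rightarrow> ('a \<Rightarrow> 'a \<Rightarrow> bool) \<Rightarrow> ('a \<Rightarrow> nat) \<Rightarrow> bool" where
  "proper_coloring V E f \<longleftrightarrow> (\<forall>u\<in>V. \<forall>v\<in>V. E u v \<longrightarrow> f u \<noteq> f v)"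

definition chromatic_number :: "'a set \<Rightarrow> ('a \<Rightarrow> 'a \<Rightarrow> bool) \<Rightarrow> nat" where
  "chromatic_number V E = (LEAST k. \<exists>f. proper_coloring V E f \<and> f ` V \<subseteq> {..<k})"

definition worm_coloring :: "'a set \<Rightarrow> ('a \<Rightarrow> 'a \<Rightarrow> bool) \<Rightarrow> ('a \<Rightarrow> nat) \<Rightarrow> bool" where
  "worm_coloring V E c \<longleftrightarrow>
     (\<forall>a\<in>V. \<forall>b\<in>V. \<forall>d\<in>V. E a b \<and> E b d \<and> E a d \<longrightarrow> card {c a, c b, c d} = 2)"

definition worm_min :: "'a set \<Rightarrow> ('a \<Rightarrow> 'a \<Rightarrow> bool) \<Rightarrow> nat" where
  "worm_min V E = (LEAST k. \<exists>c. worm_coloring V E c \<and> card (c ` V) = k)"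

text \<open>Strong product with K2: vertex v becomes (v,True) = x_v and (v,False) = y_v.\<close>
definition sp_K2_vertices :: "'a set \<Rightarrow> ('a \<times> bool) set" where
  "sp_K2_vertices V = V \<times> (UNIV :: bool set)"

definition sp_K2_edges :: "'a set \<Rightarrow> ('a \<Rightarrow> 'a \<Rightarrow> bool) \<Rightarrow> ('a \<times> bool) \<Rightarrow> ('a \<times> bool) \<Rightarrow> bool" where
  "sp_K2_edges V E p q \<longleftrightarrow>
     (fst p = fst q \<and> fst p \<in> V \<and> snd p \<noteq> snd q) \<or> E (fst p) (fst q)"

end

theory Submission
  imports Defs
begin

text \<open>Every edge uv of G spans a K4 in H, so each pair {x_u, y_u} together with either
  vertex of a neighbouring pair forms a triangle. Consequently a monochromatic pair forces
  every neighbouring pair to be monochromatic in a different colour, and a bichromatic pair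
  forces every neighbouring pair to be bichromatic in the same two colours. By connectivity,
  either all pairs are monochromatic, and the WORM colouring is a proper colouring of G
  blown up (so it uses at least k colours), or all pairs use the same two colours.
  Conversely, as G is triangle-free, every triangle of H consists of a pair and one vertex
  of a neighbouring pair, so blowing up a proper colouring of G, or colouring by the
  second coordinate, gives a WORM colouring.\<close>

lemma card_doubleton_triple: "card {a, b, x :: nat} = 2 \<Longrightarrow> a \<noteq> b \<Longrightarrow> x = a \<or> x = b"
  by (cases "x = a \<or> x = b") (auto simp: card_insert_if)

lemma doubleton_eq_if_subset: "{a, b} \<subseteq> {x, y} \<Longrightarrow> a \<noteq> b \<Longrightarrow> {a, b} = {x, y}"
  by auto

lemma connected_graph_induct:
  assumes "connected_graph V E" "u \<in> V" "v \<in> V" "P u"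
    and "\<And>x y. E x y \<Longrightarrow> x \<in> V \<Longrightarrow> y \<in> V \<Longrightarrow> P x \<Longrightarrow> P y"
  shows "P v"
proof -
  have "(\<lambda>x y. E x y \<and> x \<in> V \<and> y \<in> V)\<^sup>*\<^sup>* u v"
    using assms(1-3) unfolding connected_graph_def by blast
  then show ?thesis
    by (induction rule: rtranclp_induct) (use assms(4,5) in auto)
qed

lemma chromatic_number_le_card_image:
  assumes "finite V" "proper_coloring V E f"
  shows "chromatic_number V E \<le> card (f ` V)"
proof -
  obtain h where h: "bij_betw h (f ` V) {..<card (f ` V)}"
    using ex_bij_betw_finite_nat[OF finite_imageI[OF assms(1)]] atLeast0LessThan by metis
  have "proper_coloring V E (h \<circ> f)"
    using assms(2) h unfolding proper_coloring_def bij_betw_def inj_on_def by auto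
  moreover have "(h \<circ> f) ` V \<subseteq> {..<card (f ` V)}"
    using h unfolding bij_betw_def by auto
  ultimately show ?thesis
    unfolding chromatic_number_def by (blast intro: Least_le)
qed

lemma chromatic_number_ge_2_imp_edge:
  assumes "chromatic_number V E \<ge> 2"
  obtains u v where "E u v"
proof (rule ccontr)
  assume "\<not> thesis"
  then have "proper_coloring V E (\<lambda>_. 0)"
    using that unfolding proper_coloring_def by blast
  then have "chromatic_number V E \<le> 1"
    unfolding chromatic_number_def by (intro Least_le) auto
  then show False using assms by simp
qed

locale simple_graph_K2 =
  fixes V :: "'a set" and E :: "'a \<Rightarrow> 'a \<Rightarrow> bool"
  assumes simple: "simple_graph V E"
begin

abbreviation "HV \<equiv> sp_K2_vertices V"
abbreviation "HE \<equiv> sp_K2_edges V E"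
abbreviation "worm c \<equiv> worm_coloring HV HE c"

lemma finite_V: "finite V" and edge_sym: "E u v \<Longrightarrow> E v u" and edge_irrefl: "\<not> E u u"
  and edge_in_V: "E u v \<Longrightarrow> u \<in> V \<and> v \<in> V"
  using simple unfolding simple_graph_def by blast+

lemma finite_HV: "finite HV"
  using finite_V unfolding sp_K2_vertices_def by simp

lemma worm_pair_neighbour:
  assumes "worm c" "E u v"
  shows "card {c (u, True), c (u, False), c (v, b)} = 2"
  using assms edge_in_V[OF assms(2)]
  unfolding worm_coloring_def sp_K2_vertices_def sp_K2_edges_def by fastforce

lemma worm_monochromatic_edge:
  assumes w: "worm c" and uv: "E u v" and mono: "c (u, True) = c (u, False)"
  shows "c (v, True) = c (v, False) \<and> c (v, True) \<noteq> c (u, True)"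
proof -
  have "c (v, b) \<noteq> c (u, True)" for b
    using worm_pair_neighbour[OF w uv, of b] mono by auto
  moreover have "card {c (v, True), c (v, False), c (u, True)} = 2"
    using worm_pair_neighbour[OF w edge_sym[OF uv]] .
  ultimately show ?thesis
    using card_doubleton_triple by metis
qed

lemma worm_bichromatic_edge:
  assumes w: "worm c" and uv: "E u v" and bi: "c (u, True) \<noteq> c (u, False)"
  shows "c (v, True) \<noteq> c (v, False) \<and> {c (v, True), c (v, False)} = {c (u, True), c (u, False)}"
proof -
  have "c (v, True) \<noteq> c (v, False)"
    using worm_monochromatic_edge[OF w edge_sym[OF uv]] bi by auto
  moreover have "{c (v, True), c (v, False)} \<subseteq> {c (u, True), c (u, False)}"
    using card_doubleton_triple[OF worm_pair_neighbour[OF w uv] bi] by auto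
  ultimately show ?thesis
    using doubleton_eq_if_subset by metis
qed

lemma image_monochromatic_pairs:
  assumes "\<forall>v\<in>V. c (v, True) = c (v, False)"
  shows "c ` HV = (\<lambda>v. c (v, True)) ` V"
proof (intro equalityI subsetI)
  fix x assume "x \<in> c ` HV"
  then obtain v b where "v \<in> V" "x = c (v, b)"
    unfolding sp_K2_vertices_def by auto
  then show "x \<in> (\<lambda>v. c (v, True)) ` V"
    using assms by (cases b) auto
qed (auto simp: sp_K2_vertices_def)

lemma proper_coloring_of_monochromatic_worm:
  assumes w: "worm c" and mono: "\<forall>v\<in>V. c (v, True) = c (v, False)"
  shows "proper_coloring V E (\<lambda>v. c (v, True))"
  unfolding proper_coloring_def
  using worm_monochromatic_edge[OF w] mono by metis

context
  assumes connected: "connected_graph V E"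
begin

lemma worm_all_pairs_monochromatic:
  assumes "worm c" "v1 \<in> V" "c (v1, True) = c (v1, False)" "v \<in> V"
  shows "c (v, True) = c (v, False)"
  using connected_graph_induct[OF connected assms(2,4), where P = "\<lambda>x. c (x, True) = c (x, False)"]
    assms(3) worm_monochromatic_edge[OF assms(1)] by blast

lemma worm_card_image_le_2_if_bichromatic:
  assumes w: "worm c" and v1: "v1 \<in> V" and bi: "c (v1, True) \<noteq> c (v1, False)"
  shows "card (c ` HV) \<le> 2"
proof -
  let ?P = "\<lambda>x. c (x, True) \<noteq> c (x, False) \<and> {c (x, True), c (x, False)} = {c (v1, True), c (v1, False)}"
  have same_pair: "?P v" if "v \<in> V" for v
    using connected_graph_induct[OF connected v1 that, where P = ?P] bi
      worm_bichromatic_edge[OF w] by auto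
  have "c ` HV \<subseteq> {c (v1, True), c (v1, False)}"
  proof
    fix x assume "x \<in> c ` HV"
    then obtain v b where "v \<in> V" "x = c (v, b)"
      unfolding sp_K2_vertices_def by auto
    then show "x \<in> {c (v1, True), c (v1, False)}"
      using same_pair by (cases b) auto
  qed
  then have "card (c ` HV) \<le> card {c (v1, True), c (v1, False)}"
    by (intro card_mono) auto
  also have "\<dots> \<le> 2" by (simp add: card_insert_if)
  finally show ?thesis .
qed

lemma worm_card_image_dichotomy:
  assumes w: "worm c" and v1: "v1 \<in> V"
  shows "chromatic_number V E \<le> card (c ` HV) \<or> card (c ` HV) \<le> 2"
proof (cases "c (v1, True) = c (v1, False)")
  case True
  then have mono: "\<forall>v\<in>V. c (v, True) = c (v, False)"
    using worm_all_pairs_monochromatic[OF w v1] by blast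
  have "chromatic_number V E \<le> card ((\<lambda>v. c (v, True)) ` V)"
    using chromatic_number_le_card_image[OF finite_V proper_coloring_of_monochromatic_worm[OF w mono]] .
  then show ?thesis
    using image_monochromatic_pairs[OF mono] by simp
next
  case False
  then show ?thesis
    using worm_card_image_le_2_if_bichromatic[OF w v1] by simp
qed

end

lemma worm_card_image_ge_2:
  assumes w: "worm c" and uv: "E u v"
  shows "2 \<le> card (c ` HV)"
proof -
  have "{c (u, True), c (u, False), c (v, True)} \<subseteq> c ` HV"
    using edge_in_V[OF uv] unfolding sp_K2_vertices_def by auto
  then have "card {c (u, True), c (u, False), c (v, True)} \<le> card (c ` HV)"
    using finite_HV by (intro card_mono) auto
  then show ?thesis
    using worm_pair_neighbour[OF w uv] by simp
qed

lemma edge_same_fst_imp_snd_ne: "HE p q \<Longrightarrow> fst p = fst q \<Longrightarrow> snd p \<noteq> snd q"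
  unfolding sp_K2_edges_def using edge_irrefl by auto

lemma edge_fst_ne_imp_edge: "HE p q \<Longrightarrow> fst p \<noteq> fst q \<Longrightarrow> E (fst p) (fst q)"
  unfolding sp_K2_edges_def by auto

context
  assumes tri_free: "triangle_free V E"
begin

lemma triangle_card_fst:
  assumes ab: "HE a b" and bd: "HE b d" and ad: "HE a d"
  shows "card {fst a, fst b, fst d} = 2"
proof -
  have "\<not> (fst a \<noteq> fst b \<and> fst b \<noteq> fst d \<and> fst a \<noteq> fst d)"
    using tri_free edge_fst_ne_imp_edge[OF ab] edge_fst_ne_imp_edge[OF bd]
      edge_fst_ne_imp_edge[OF ad] edge_in_V unfolding triangle_free_def by metis
  moreover have "\<not> (fst a = fst b \<and> fst b = fst d)"
    using edge_same_fst_imp_snd_ne[OF ab] edge_same_fst_imp_snd_ne[OF bd]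
      edge_same_fst_imp_snd_ne[OF ad] by auto
  ultimately show ?thesis
    by (auto simp: card_insert_if)
qed

lemma worm_of_proper_coloring:
  assumes f: "proper_coloring V E f"
  shows "worm (\<lambda>p\<in>HV. f (fst p))"
  unfolding worm_coloring_def
proof (intro ballI impI, elim conjE)
  fix a b d assume in_HV: "a \<in> HV" "b \<in> HV" "d \<in> HV"
    and ab: "HE a b" and bd: "HE b d" and ad: "HE a d"
  have adjacent: "E x y" if "x \<in> {fst a, fst b, fst d}" "y \<in> {fst a, fst b, fst d}" "x \<noteq> y" for x y
    using that edge_fst_ne_imp_edge[OF ab] edge_fst_ne_imp_edge[OF bd]
      edge_fst_ne_imp_edge[OF ad] edge_sym by (metis empty_iff insertE)
  have inj: "inj_on f {fst a, fst b, fst d}"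
  proof (rule inj_onI, rule ccontr)
    fix x y assume "x \<in> {fst a, fst b, fst d}" "y \<in> {fst a, fst b, fst d}" "f x = f y" "x \<noteq> y"
    then show False
      using adjacent edge_in_V f unfolding proper_coloring_def by blast
  qed
  have "card {f (fst a), f (fst b), f (fst d)} = 2"
    using card_image[OF inj] triangle_card_fst[OF ab bd ad] by simp
  then show "card {(\<lambda>p\<in>HV. f (fst p)) a, (\<lambda>p\<in>HV. f (fst p)) b, (\<lambda>p\<in>HV. f (fst p)) d} = 2"
    using in_HV by simp
qed

lemma worm_of_layer_coloring: "worm (\<lambda>p. of_bool (snd p))"
  unfolding worm_coloring_def
proof (intro ballI impI, elim conjE)
  fix a b d assume ab: "HE a b" and bd: "HE b d" and ad: "HE a d"
  have "\<not> (snd a = snd b \<and> snd b = snd d)"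
  proof
    assume "snd a = snd b \<and> snd b = snd d"
    then have "fst a \<noteq> fst b \<and> fst b \<noteq> fst d \<and> fst a \<noteq> fst d"
      using edge_same_fst_imp_snd_ne[OF ab] edge_same_fst_imp_snd_ne[OF bd]
        edge_same_fst_imp_snd_ne[OF ad] by auto
    then show False
      using triangle_card_fst[OF ab bd ad] by simp
  qed
  then show "card {of_bool (snd a), of_bool (snd b), of_bool (snd d) :: nat} = 2"
    by (cases "snd a"; cases "snd b"; cases "snd d") (auto simp: insert_commute)
qed

lemma worm_min_eq_2:
  assumes uv: "E u v"
  shows "worm_min HV HE = 2"
  unfolding worm_min_def
proof (rule Least_equality)
  have "(\<lambda>p. of_bool (snd p) :: nat) ` HV = {0, 1}"
    using edge_in_V[OF uv] unfolding sp_K2_vertices_def by force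
  then show "\<exists>c. worm c \<and> card (c ` HV) = 2"
    using worm_of_layer_coloring by fastforce
next
  fix n assume "\<exists>c. worm c \<and> card (c ` HV) = n"
  then show "2 \<le> n"
    using worm_card_image_ge_2[OF _ uv] by blast
qed

end

lemma bij_monochromatic_worm_proper:
  assumes connected: "connected_graph V E" and tri_free: "triangle_free V E" and v1: "v1 \<in> V"
  shows "bij_betw (\<lambda>c. \<lambda>v\<in>V. c (v, True))
           {c \<in> extensional HV. worm c \<and> card (c ` HV) = s \<and> c (v1, True) = c (v1, False)}
           {f \<in> extensional V. proper_coloring V E f \<and> card (f ` V) = s}"
    (is "bij_betw ?F ?W ?P")
proof (rule bij_betw_byWitness[where f' = "\<lambda>f. \<lambda>p\<in>HV. f (fst p)"])
  have mono: "\<forall>v\<in>V. c (v, True) = c (v, False)" if "c \<in> ?W" for c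
    using worm_all_pairs_monochromatic[OF connected _ v1] that by blast
  show "\<forall>c\<in>?W. (\<lambda>p\<in>HV. ?F c (fst p)) = c"
  proof
    fix c assume c: "c \<in> ?W"
    show "(\<lambda>p\<in>HV. ?F c (fst p)) = c"
    proof (rule extensionalityI[of _ HV])
      fix p assume "p \<in> HV"
      then show "(\<lambda>p\<in>HV. ?F c (fst p)) p = c p"
        using mono[OF c] unfolding sp_K2_vertices_def by (cases p; cases "snd p") auto
    qed (use c in auto)
  qed
  show "\<forall>f\<in>?P. ?F (\<lambda>p\<in>HV. f (fst p)) = f"
    unfolding sp_K2_vertices_def by (auto simp: extensional_def fun_eq_iff)
  show "?F ` ?W \<subseteq> ?P"
  proof
    fix f assume "f \<in> ?F ` ?W"
    then obtain c where c: "c \<in> ?W" and f: "f = ?F c" by blast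
    have "proper_coloring V E f"
      using proper_coloring_of_monochromatic_worm[of c] mono[OF c] c f
      unfolding proper_coloring_def by auto
    moreover have "f ` V = c ` HV"
      using image_monochromatic_pairs[OF mono[OF c]] f by auto
    ultimately show "f \<in> ?P" using c f by auto
  qed
  show "(\<lambda>f. \<lambda>p\<in>HV. f (fst p)) ` ?P \<subseteq> ?W"
  proof
    fix c assume "c \<in> (\<lambda>f. \<lambda>p\<in>HV. f (fst p)) ` ?P"
    then obtain f where f: "f \<in> ?P" and c: "c = (\<lambda>p\<in>HV. f (fst p))" by blast
    have mono: "\<forall>v\<in>V. c (v, True) = c (v, False)"
      unfolding c sp_K2_vertices_def by auto
    have "c ` HV = f ` V"
      unfolding image_monochromatic_pairs[OF mono] unfolding c sp_K2_vertices_def by auto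
    then show "c \<in> ?W"
      using worm_of_proper_coloring[OF tri_free] f mono v1 c by auto
  qed
qed

end

theorem mainTheorem2:
  fixes V :: "'a set" and E :: "'a \<Rightarrow> 'a \<Rightarrow> bool" and k :: nat and v1 :: 'a
  assumes "simple_graph V E"
    and "connected_graph V E"
    and "triangle_free V E"
    and "k \<ge> 2"
    and "chromatic_number V E = k"
    and "v1 \<in> V"
  shows
    "worm_min (sp_K2_vertices V) (sp_K2_edges V E) = 2
     \<and> (\<forall>s\<ge>k.
          (\<forall>c. worm_coloring (sp_K2_vertices V) (sp_K2_edges V E) c
               \<and> card (c ` sp_K2_vertices V) = s \<and> c (v1, True) = c (v1, False)
               \<longrightarrow> (\<forall>v\<in>V. c (v, True) = c (v, False)))
          \<and> bij_betw (\<lambda>c. \<lambda>v\<in>V. c (v, True))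
              {c \<in> extensional (sp_K2_vertices V).
                 worm_coloring (sp_K2_vertices V) (sp_K2_edges V E) c
                 \<and> card (c ` sp_K2_vertices V) = s \<and> c (v1, True) = c (v1, False)}
              {f \<in> extensional V. proper_coloring V E f \<and> card (f ` V) = s})
     \<and> (k \<ge> 4 \<longrightarrow> (\<forall>t. 3 \<le> t \<and> t \<le> k - 1 \<longrightarrow>
          \<not> (\<exists>c. worm_coloring (sp_K2_vertices V) (sp_K2_edges V E) c
                \<and> card (c ` sp_K2_vertices V) = t)))"
proof -
  interpret simple_graph_K2 V E by unfold_locales (fact assms(1))
  obtain u w where "E u w"
    using chromatic_number_ge_2_imp_edge assms(4,5) by metis
  then have "worm_min HV HE = 2"
    using worm_min_eq_2 assms(3) by blast
  moreover have "\<forall>c. worm c \<and> c (v1, True) = c (v1, False) \<longrightarrow> (\<forall>v\<in>V. c (v, True) = c (v, False))"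
    using worm_all_pairs_monochromatic assms(2,6) by blast
  moreover have "\<not> (\<exists>c. worm c \<and> card (c ` HV) = t)" if "3 \<le> t" "t \<le> k - 1" for t
    using worm_card_image_dichotomy assms(2,5,6) that by fastforce
  ultimately show ?thesis
    using bij_monochromatic_worm_proper assms(2,3,6) by auto
qed

end
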